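(* If $r$ divides $s$, then $\tau^*(n,P^{(r)}_s)\le\left(\left(\frac{r}{s}\right)^r+o(1)\right)\binom{n}{r}$, where $o(1)\to0$ as $n\to\infty$ with $r,s$ fixed.
   Context: $K^{(r)}_n$ is the ordered complete $r$-uniform hypergraph on $[n]=\{1,\dots,n\}$ with its natural order; a copy of an ordered hypergraph $H$ in $K^{(r)}_n$ is the image of $H$ under an order-preserving injection $V(H)\to[n]$. The natural path $P^{(r)}_s$ has vertices $v_1<\dots<v_s$ and edges all sets of $r$ consecutive vertices $\{v_j,\dots,v_{j+r-1}\}$, $1\le j\le s-r+1$. A fractional $H$-transversal is a function $w$ from the edges of $K^{(r)}_n$ to $[0,\infty)$ such that $\sum_{e\in E(H')}w(e)\ge1$ for every copy $H'$ of $H$ in $K^{(r)}_n$; $\tau^*(n,H)$ is the minimum of $\sum_e w(e)$ over all fractional $H$-transversals. *)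

theory Defs
  imports Complex_Main
begin

definition Kedges :: "nat \<Rightarrow> nat \<Rightarrow> nat set set" where
  "Kedges r n = {e. e \<subseteq> {1..n} \<and> card e = r}"

text \<open>An ordered hypergraph is given by a vertex set {1..k} (natural order) and an edge set EH.
  The natural r-uniform path on {1..s}: edges are the r consecutive vertices.\<close>
definition path_edges :: "nat \<Rightarrow> nat \<Rightarrow> nat set set" where
  "path_edges r s = {{j..j + r - 1} | j. 1 \<le> j \<and> j + r - 1 \<le> s}"

text \<open>Copies of H (on {1..k}, edges EH) in K_n: images under order-preserving injections
  f : {1..k} \<rightarrow> {1..n}.\<close>
definition frac_transversal ::
    "nat \<Rightarrow> nat \<Rightarrow> nat \<Rightarrow> nat set set \<Rightarrow> (nat set \<Rightarrow> real) \<Rightarrow> bool" where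
  "frac_transversal r n k EH w \<longleftrightarrow>
     (\<forall>e\<in>Kedges r n. 0 \<le> w e) \<and>
     (\<forall>f. strict_mono_on {1..k} f \<and> f ` {1..k} \<subseteq> {1..n} \<longrightarrow>
          1 \<le> (\<Sum>e\<in>(\<lambda>E. f ` E) ` EH. w e))"

definition tau_star :: "nat \<Rightarrow> nat \<Rightarrow> nat \<Rightarrow> nat set set \<Rightarrow> real" where
  "tau_star r n k EH = Inf {\<Sum>e\<in>Kedges r n. w e | w. frac_transversal r n k EH w}"

end

theory Submission
  imports Defs
begin

(*
  Split [n] into m = s / r consecutive blocks of q = ceil(n / m) vertices and give
  weight 1 / m to every edge lying inside one block.  The total weight is at most
  C(q, r) <= (q / n)^r C(n, r), which is ((r / s)^r + o(1)) C(n, r).  Along a copy of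
  the path the block index of its vertices is monotone with at most m values, so it
  changes at most m - 1 times; each change spoils at most r - 1 of the
  s - r + 1 = m + (m - 1)(r - 1) edges of the path.  Hence at least m edges of the
  copy lie inside single blocks, and their weights sum to at least 1.
*)

lemma ex_jump_if_neq:
  fixes g :: "nat \<Rightarrow> 'a"
  assumes "a \<le> b" "g a \<noteq> g b"
  shows "\<exists>t\<in>{a..<b}. g t \<noteq> g (Suc t)"
  using assms
proof (induction b rule: dec_induct)
  case base then show ?case by simp
next
  case (step b)
  then show ?case by (cases "g a = g b") auto
qed

lemma card_jumps_le:
  fixes g :: "nat \<Rightarrow> nat"
  assumes "a \<le> b" "mono_on {a..b} g"
  shows "card {t\<in>{a..<b}. g t \<noteq> g (Suc t)} \<le> g b - g a"
  using assms
proof (induction b rule: dec_induct)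
  case base then show ?case by simp
next
  case (step b)
  let ?J = "\<lambda>b. {t\<in>{a..<b}. g t \<noteq> g (Suc t)}"
  have "mono_on {a..b} g" "g a \<le> g b" "g b \<le> g (Suc b)"
    using step.prems step.hyps by (auto simp: mono_on_def)
  moreover have "?J (Suc b) = (if g b = g (Suc b) then ?J b else insert b (?J b))"
    using step.hyps by (auto simp: less_Suc_eq)
  ultimately show ?case
    using step.IH by (simp split: if_splits)
qed

lemma card_constant_windows:
  fixes g :: "nat \<Rightarrow> nat"
  assumes "0 < r" "r \<le> s" "mono_on {1..s} g"
  shows "s + 1 - r \<le> card {j\<in>{1..s + 1 - r}. g j = g (j + r - 1)} + (g s - g 1) * (r - 1)"
proof -
  define J where "J = {t\<in>{1..<s}. g t \<noteq> g (Suc t)}"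
  define Good where "Good = {j\<in>{1..s + 1 - r}. g j = g (j + r - 1)}"
  define Bad where "Bad = {j\<in>{1..s + 1 - r}. g j \<noteq> g (j + r - 1)}"
  have "card J \<le> g s - g 1"
    unfolding J_def using card_jumps_le assms by simp
  have "Bad \<subseteq> (\<Union>t\<in>J. {t + 2 - r..t})"
  proof
    fix j assume "j \<in> Bad"
    then have "j \<le> j + r - 1" "g j \<noteq> g (j + r - 1)" "j + r - 1 \<le> s"
      using assms(1) unfolding Bad_def by auto
    then obtain t where t: "t \<in> {j..<j + r - 1}" "g t \<noteq> g (Suc t)"
      using ex_jump_if_neq by blast
    then have "t \<in> J" "j \<in> {t + 2 - r..t}"
      using \<open>j + r - 1 \<le> s\<close> \<open>j \<in> Bad\<close> unfolding J_def Bad_def by auto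
    then show "j \<in> (\<Union>t\<in>J. {t + 2 - r..t})" by blast
  qed
  have "finite J" unfolding J_def by simp
  have "card Bad \<le> card (\<Union>t\<in>J. {t + 2 - r..t})"
    using \<open>Bad \<subseteq> _\<close> \<open>finite J\<close> by (intro card_mono) auto
  also have "\<dots> \<le> (\<Sum>t\<in>J. card {t + 2 - r..t})"
    using \<open>finite J\<close> by (rule card_UN_le)
  also have "\<dots> \<le> card J * (r - 1)"
    using sum_bounded_above[of J "\<lambda>t. card {t + 2 - r..t}" "r - 1"] by simp
  also have "\<dots> \<le> (g s - g 1) * (r - 1)"
    using \<open>card J \<le> g s - g 1\<close> by simp
  finally have "card Bad \<le> (g s - g 1) * (r - 1)" .
  moreover have "card Good + card Bad = s + 1 - r"
  proof -
    have "Good \<union> Bad = {1..s + 1 - r}" "Good \<inter> Bad = {}"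
      unfolding Good_def Bad_def by auto
    then show ?thesis
      using card_Un_disjoint[of Good Bad] unfolding Good_def Bad_def by simp
  qed
  ultimately show ?thesis unfolding Good_def by linarith
qed

lemma binomial_le_ratio_power_binomial:
  assumes "q \<le> n"
  shows "real (q choose r) \<le> (real q / real n) ^ r * real (n choose r)"
proof (cases "r \<le> q \<and> 0 < n")
  case False
  with assms show ?thesis by (auto simp: binomial_eq_0 power_0_left)
next
  case True
  then have "r \<le> n" "0 < n" using assms by auto
  have factor: "real (q - i) / real (r - i) \<le> real q / real n * (real (n - i) / real (r - i))"
    if "i < r" for i
  proof -
    have "real q * real i \<le> real n * real i"
      using assms by (intro mult_right_mono) auto
    then have "real (q - i) * real n \<le> real q * real (n - i)"
      using that True \<open>r \<le> n\<close> by (simp add: algebra_simps)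
    then have "real (q - i) \<le> real q / real n * real (n - i)"
      using \<open>0 < n\<close> by (simp add: field_simps)
    then show ?thesis
      by (metis divide_right_mono of_nat_0_le_iff times_divide_eq_right)
  qed
  have "real (q choose r) = (\<Prod>i = 0..<r. real (q - i) / real (r - i))"
    using binomial_altdef_of_nat True by blast
  also have "\<dots> \<le> (\<Prod>i = 0..<r. real q / real n * (real (n - i) / real (r - i)))"
    using factor by (intro prod_mono) auto
  also have "\<dots> = (real q / real n) ^ r * (\<Prod>i = 0..<r. real (n - i) / real (r - i))"
    by (simp only: prod.distrib prod_constant card_atLeastLessThan) simp
  also have "\<dots> = (real q / real n) ^ r * real (n choose r)"
    using binomial_altdef_of_nat[OF \<open>r \<le> n\<close>, where 'a = real] by simp
  finally show ?thesis .
qed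

lemma finite_Kedges: "finite (Kedges r n)"
  by (rule finite_subset[of _ "Pow {1..n}"]) (auto simp: Kedges_def)

lemma tau_star_le_sum:
  assumes "frac_transversal r n k EH w"
  shows "tau_star r n k EH \<le> (\<Sum>e\<in>Kedges r n. w e)"
proof -
  have "bdd_below {\<Sum>e\<in>Kedges r n. w e | w. frac_transversal r n k EH w}"
    by (rule bdd_belowI[of _ 0]) (auto simp: frac_transversal_def intro: sum_nonneg)
  then show ?thesis
    unfolding tau_star_def using assms by (auto intro: cInf_lower)
qed

lemma path_edges_eq:
  assumes "0 < r"
  shows "path_edges r s = (\<lambda>j. {j..j + r - 1}) ` {1..s + 1 - r}"
  using assms unfolding path_edges_def by force

lemma inj_on_path_windows:
  fixes r s :: nat and f :: "nat \<Rightarrow> 'a::linorder"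
  assumes "0 < r" "strict_mono_on {1..s} f"
  shows "inj_on (\<lambda>j. f ` {j..j + r - 1}) {1..s + 1 - r}"
proof -
  have le: "j' \<le> j"
    if "j \<in> {1..s + 1 - r}" "j' \<in> {1..s + 1 - r}" "f ` {j..j + r - 1} = f ` {j'..j' + r - 1}"
    for j j'
  proof -
    have "f j \<in> f ` {j..j + r - 1}"
      using \<open>0 < r\<close> by (intro imageI) simp
    then have "f j \<in> f ` {j'..j' + r - 1}"
      using that(3) by simp
    then obtain x where "x \<in> {j'..j' + r - 1}" "f j = f x" by auto
    moreover have "x \<in> {1..s}" "j \<in> {1..s}"
      using that \<open>x \<in> {j'..j' + r - 1}\<close> by auto
    ultimately show ?thesis
      using strict_mono_on_imp_inj_on[OF assms(2)] by (auto dest: inj_onD)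
  qed
  show ?thesis
    by (rule inj_onI) (use le in \<open>metis order_antisym\<close>)
qed

lemma sum_path_copy_edges:
  fixes f :: "nat \<Rightarrow> 'a::linorder"
  assumes "0 < r" "strict_mono_on {1..s} f"
  shows "(\<Sum>e\<in>(\<lambda>E. f ` E) ` path_edges r s. w e) = (\<Sum>j\<in>{1..s + 1 - r}. w (f ` {j..j + r - 1}))"
  unfolding path_edges_eq[OF assms(1)] image_image
  using sum.reindex[OF inj_on_path_windows[OF assms], of w] by simp

definition block :: "nat \<Rightarrow> nat \<Rightarrow> nat" where
  "block q x = (x - 1) div q"

definition block_edges :: "nat \<Rightarrow> nat \<Rightarrow> nat \<Rightarrow> nat set set" where
  "block_edges r n q = {e \<in> Kedges r n. \<exists>i. \<forall>x\<in>e. block q x = i}"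

definition block_weight :: "nat \<Rightarrow> nat \<Rightarrow> nat \<Rightarrow> nat \<Rightarrow> nat set \<Rightarrow> real" where
  "block_weight r n m q e = (if e \<in> block_edges r n q then 1 / real m else 0)"

lemma block_mono: "x \<le> y \<Longrightarrow> block q x \<le> block q y"
  unfolding block_def by (intro div_le_mono diff_le_mono)

lemma block_less:
  assumes "0 < x" "x \<le> m * q"
  shows "block q x < m"
  using assms unfolding block_def
  by (metis Suc_diff_1 Suc_le_lessD div_less_iff_less_mult mult.commute mult_0_right
      bot_nat_0.not_eq_extremum order_less_le_trans)

lemma mem_block_interval:
  assumes "0 < q" "0 < x"
  shows "x \<in> {block q x * q + 1..block q x * q + q}"
proof -
  have "(x - 1) div q * q + (x - 1) mod q = x - 1" "(x - 1) mod q < q"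
    using assms(1) by simp_all
  then have "block q x * q \<le> x - 1" "x - 1 < block q x * q + q"
    unfolding block_def by linarith+
  then show ?thesis using assms(2) by auto
qed

lemma card_block_edges_le:
  assumes "0 < r" "0 < q" "n \<le> m * q"
  shows "card (block_edges r n q) \<le> m * (q choose r)"
proof -
  let ?I = "\<lambda>i. {i * q + 1..i * q + q}"
  have "block_edges r n q \<subseteq> (\<Union>i<m. {e. e \<subseteq> ?I i \<and> card e = r})"
  proof
    fix e assume "e \<in> block_edges r n q"
    then obtain i where i: "\<forall>x\<in>e. block q x = i" and e: "e \<subseteq> {1..n}" "card e = r"
      unfolding block_edges_def Kedges_def by auto
    have "e \<noteq> {}"
      using e(2) \<open>0 < r\<close> by auto
    then obtain x where "x \<in> e"
      by blast
    then have "i < m"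
      using i e(1) assms(3) block_less[of x m q] by auto
    moreover have "e \<subseteq> ?I i"
    proof
      fix y assume "y \<in> e"
      then have "0 < y" "block q y = i"
        using i e(1) by auto
      then show "y \<in> ?I i"
        using mem_block_interval[OF \<open>0 < q\<close>, of y] by simp
    qed
    ultimately show "e \<in> (\<Union>i<m. {e. e \<subseteq> ?I i \<and> card e = r})"
      using e(2) by blast
  qed
  then have "card (block_edges r n q) \<le> card (\<Union>i<m. {e. e \<subseteq> ?I i \<and> card e = r})"
    by (intro card_mono) auto
  also have "\<dots> \<le> (\<Sum>i<m. card {e. e \<subseteq> ?I i \<and> card e = r})"
    by (rule card_UN_le) simp
  also have "\<dots> = m * (q choose r)"
    by (simp add: n_subsets)
  finally show ?thesis .
qed

lemma sum_block_weight:
  "(\<Sum>e\<in>Kedges r n. block_weight r n m q e) = real (card (block_edges r n q)) / real m"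
proof -
  have "(\<Sum>e\<in>Kedges r n. block_weight r n m q e) = (\<Sum>e\<in>block_edges r n q. 1 / real m)"
    by (rule sum.mono_neutral_cong_right)
      (auto simp: finite_Kedges block_edges_def block_weight_def)
  then show ?thesis
    by simp
qed

lemma card_constant_windows_ge:
  fixes g :: "nat \<Rightarrow> nat"
  assumes "0 < r" "0 < m" "mono_on {1..m * r} g" "g (m * r) < m"
  shows "m \<le> card {j\<in>{1..m * r + 1 - r}. g j = g (j + r - 1)}"
proof -
  have "r \<le> m * r"
    using \<open>0 < m\<close> by simp
  have "(g (m * r) - g 1) * (r - 1) \<le> (m - 1) * (r - 1)"
    using assms(4) by (intro mult_right_mono) auto
  moreover have "m * r + 1 - r = m + (m - 1) * (r - 1)"
    using \<open>0 < m\<close> \<open>0 < r\<close> by (cases m; cases r) (auto simp: algebra_simps)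
  ultimately show ?thesis
    using card_constant_windows[OF \<open>0 < r\<close> \<open>r \<le> m * r\<close> assms(3)] by linarith
qed

lemma image_window_mem_block_edges:
  assumes "strict_mono_on {1..s} f" "f ` {1..s} \<subseteq> {1..n}" "0 < r" "j \<in> {1..s + 1 - r}"
    and same_block: "block q (f j) = block q (f (j + r - 1))"
  shows "f ` {j..j + r - 1} \<in> block_edges r n q"
proof -
  have window: "{j..j + r - 1} \<subseteq> {1..s}"
    using assms(3,4) by auto
  have "card (f ` {j..j + r - 1}) = card {j..j + r - 1}"
    using window by (intro card_image inj_on_subset[OF strict_mono_on_imp_inj_on[OF assms(1)]])
  then have "card (f ` {j..j + r - 1}) = r"
    using \<open>0 < r\<close> by simp
  moreover have "f ` {j..j + r - 1} \<subseteq> {1..n}"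
    using assms(2) window by auto
  moreover have "block q y = block q (f j)" if y: "y \<in> f ` {j..j + r - 1}" for y
  proof -
    obtain x where x: "x \<in> {j..j + r - 1}" "y = f x"
      using y by blast
    then have "f j \<le> f x" "f x \<le> f (j + r - 1)"
      using window by (auto intro!: strict_mono_on_leD[OF assms(1)])
    then have "block q (f j) \<le> block q y" "block q y \<le> block q (f (j + r - 1))"
      unfolding x(2) by (simp_all add: block_mono)
    then show ?thesis
      using same_block by linarith
  qed
  ultimately show ?thesis
    unfolding block_edges_def Kedges_def by blast
qed

lemma block_weight_frac_transversal:
  assumes "0 < r" "0 < m" "0 < q" "n \<le> m * q"
  shows "frac_transversal r n (m * r) (path_edges r (m * r)) (block_weight r n m q)"
  unfolding frac_transversal_def
proof (intro conjI allI impI ballI)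
  fix e show "0 \<le> block_weight r n m q e"
    by (simp add: block_weight_def)
next
  fix f :: "nat \<Rightarrow> nat"
  assume "strict_mono_on {1..m * r} f \<and> f ` {1..m * r} \<subseteq> {1..n}"
  then have f: "strict_mono_on {1..m * r} f" "f ` {1..m * r} \<subseteq> {1..n}"
    by auto
  define g where "g x = block q (f x)" for x
  define Good where "Good = {j\<in>{1..m * r + 1 - r}. g j = g (j + r - 1)}"
  have g_mono: "mono_on {1..m * r} g"
    using f(1) unfolding g_def by (auto intro!: mono_onI block_mono dest: strict_mono_on_leD)
  have "m * r \<in> {1..m * r}"
    using \<open>0 < m\<close> \<open>0 < r\<close> by simp
  then have "f (m * r) \<in> {1..n}"
    using f(2) by blast
  then have "g (m * r) < m"
    using assms(4) unfolding g_def by (intro block_less) auto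
  then have "m \<le> card Good"
    unfolding Good_def by (rule card_constant_windows_ge[OF \<open>0 < r\<close> \<open>0 < m\<close> g_mono])
  have "f ` {j..j + r - 1} \<in> block_edges r n q" if "j \<in> Good" for j
    using image_window_mem_block_edges[OF f \<open>0 < r\<close>, of j q] that
    unfolding Good_def g_def by blast
  then have "block_weight r n m q (f ` {j..j + r - 1}) = 1 / real m" if "j \<in> Good" for j
    using that by (simp add: block_weight_def)
  then have "(\<Sum>j\<in>Good. block_weight r n m q (f ` {j..j + r - 1})) = real (card Good) / real m"
    by simp
  also have "\<dots> \<ge> 1"
    using \<open>m \<le> card Good\<close> \<open>0 < m\<close> by simp
  also have "(\<Sum>j\<in>Good. block_weight r n m q (f ` {j..j + r - 1}))
      \<le> (\<Sum>j\<in>{1..m * r + 1 - r}. block_weight r n m q (f ` {j..j + r - 1}))"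
    by (rule sum_mono2) (auto simp: Good_def block_weight_def)
  also have "\<dots> = (\<Sum>e\<in>(\<lambda>E. f ` E) ` path_edges r (m * r). block_weight r n m q e)"
    by (rule sum_path_copy_edges[OF \<open>0 < r\<close> f(1), symmetric])
  finally show "1 \<le> (\<Sum>e\<in>(\<lambda>E. f ` E) ` path_edges r (m * r). block_weight r n m q e)" .
qed

lemma tau_star_path_le_binomial:
  assumes "0 < r" "0 < m" "0 < q" "n \<le> m * q"
  shows "tau_star r n (m * r) (path_edges r (m * r)) \<le> real (q choose r)"
proof -
  have "tau_star r n (m * r) (path_edges r (m * r)) \<le> (\<Sum>e\<in>Kedges r n. block_weight r n m q e)"
    by (rule tau_star_le_sum[OF block_weight_frac_transversal[OF assms]])
  also have "\<dots> = real (card (block_edges r n q)) / real m"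
    by (rule sum_block_weight)
  also have "\<dots> \<le> real (m * (q choose r)) / real m"
    using card_block_edges_le[OF \<open>0 < r\<close> \<open>0 < q\<close> \<open>n \<le> m * q\<close>]
    by (intro divide_right_mono of_nat_mono) simp_all
  also have "\<dots> = real (q choose r)"
    using \<open>0 < m\<close> by simp
  finally show ?thesis .
qed

lemma tau_star_path_le:
  assumes "0 < r" "0 < m" "0 < n"
  shows "tau_star r n (m * r) (path_edges r (m * r))
    \<le> (1 / real m + 1 / real n) ^ r * real (n choose r)"
proof -
  define q where "q = (n + m - 1) div m"
  have "q * m + (n + m - 1) mod m = n + m - 1" "(n + m - 1) mod m < m"
    unfolding q_def using \<open>0 < m\<close> by simp_all
  then have "q * m \<le> n + m - 1" "n \<le> m * q"
    by (simp_all add: mult.commute)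
  have "0 < q"
    using \<open>n \<le> m * q\<close> \<open>0 < n\<close> by (cases q) auto
  have "n \<le> n * m"
    using \<open>0 < m\<close> by simp
  then have "q * m < m + n * m"
    using \<open>q * m \<le> n + m - 1\<close> \<open>0 < m\<close> by linarith
  then have "q * m < Suc n * m"
    by simp
  then have "q \<le> n"
    by (metis less_Suc_eq_le mult_less_cancel2)
  have "q * m \<le> n + m"
    using \<open>q * m \<le> n + m - 1\<close> by linarith
  then have "real q * real m \<le> real n + real m"
    by (metis of_nat_add of_nat_le_iff of_nat_mult)
  then have "real q / real n \<le> 1 / real m + 1 / real n"
    using \<open>0 < n\<close> \<open>0 < m\<close> by (simp add: field_simps)
  have "tau_star r n (m * r) (path_edges r (m * r)) \<le> real (q choose r)"
    using tau_star_path_le_binomial \<open>0 < r\<close> \<open>0 < m\<close> \<open>0 < q\<close> \<open>n \<le> m * q\<close> by blast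
  also have "\<dots> \<le> (real q / real n) ^ r * real (n choose r)"
    using binomial_le_ratio_power_binomial \<open>q \<le> n\<close> by blast
  also have "\<dots> \<le> (1 / real m + 1 / real n) ^ r * real (n choose r)"
    using \<open>real q / real n \<le> 1 / real m + 1 / real n\<close>
    by (intro mult_right_mono power_mono) auto
  finally show ?thesis .
qed

theorem proposition3p2:
  fixes r s :: nat
  assumes "0 < r" and "0 < s" and "r dvd s"
  shows "\<forall>\<epsilon>>0. \<exists>N. \<forall>n\<ge>N.
           tau_star r n s (path_edges r s)
             \<le> ((real r / real s) ^ r + \<epsilon>) * real (n choose r)"
proof (intro allI impI)
  fix \<epsilon> :: real assume "0 < \<epsilon>"
  obtain m where s: "s = m * r"
    using \<open>r dvd s\<close> by (metis dvdE mult.commute)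
  then have "0 < m" and ratio: "real r / real (m * r) = 1 / real m"
    using \<open>0 < r\<close> \<open>0 < s\<close> by auto
  have "(\<lambda>n. (1 / real m + 1 / real n) ^ r) \<longlonglongrightarrow> (1 / real m + 0) ^ r"
    by (intro tendsto_intros lim_inverse_n')
  then have "eventually (\<lambda>n. (1 / real m + 1 / real n) ^ r < (1 / real m) ^ r + \<epsilon>) sequentially"
    using \<open>0 < \<epsilon>\<close> by (intro order_tendstoD) auto
  then have "eventually (\<lambda>n. tau_star r n s (path_edges r s)
      \<le> ((real r / real s) ^ r + \<epsilon>) * real (n choose r)) sequentially"
    using eventually_gt_at_top[of 0]
  proof eventually_elim
    case (elim n)
    have "tau_star r n (m * r) (path_edges r (m * r))
        \<le> (1 / real m + 1 / real n) ^ r * real (n choose r)"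
      using tau_star_path_le \<open>0 < r\<close> \<open>0 < m\<close> elim(2) by blast
    also have "\<dots> \<le> ((1 / real m) ^ r + \<epsilon>) * real (n choose r)"
      using elim(1) by (intro mult_right_mono) auto
    finally show ?case
      by (simp only: s ratio)
  qed
  then show "\<exists>N. \<forall>n\<ge>N. tau_star r n s (path_edges r s)
      \<le> ((real r / real s) ^ r + \<epsilon>) * real (n choose r)"
    unfolding eventually_sequentially .
qed

end
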